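(* Let $(E,\mathcal{P})$ be a random locally convex module over $K$ with base $(\Omega,\mathcal{F},P)$, where $(\Omega,\mathcal{F},P)$ is nonatomic. If $f:E\to L^0(\mathcal F,K)$ is a module homomorphism that is continuous from $(E,\mathcal{T}_{\varepsilon,\lambda})$ to $(L^{0}(\mathcal{F},K),\mathcal{T}_{c})$ (i.e. $f\in E^\ast_{min}$), then $f(x)=0$ for all $x\in E$.
   Context: $(\Omega,\mathcal{F},P)$ is a probability space, $K=\mathbb{R}$ or $\mathbb{C}$, and $L^{0}(\mathcal{F},K)$ is the algebra of equivalence classes (modulo a.s. equality) of $K$-valued measurable random variables. $L^0(\mathcal F,\mathbb R)$ is ordered by $\xi\le\eta$ iff $\xi^0\le\eta^0$ a.s.; $L^{0}_{+}=\{\xi\ge 0\}$, $L^{0}_{++}=\{\xi: \xi>0 \text{ a.s. on }\Omega\}$. An $L^0$-seminorm on a left $L^0(\mathcal F,K)$-module $E$ is a map $\|\cdot\|:E\to L^0_+$ with $\|x+y\|\le\|x\|+\|y\|$ and $\|\xi x\|=|\xi|\,\|x\|$ for all $\xi\in L^0(\mathcal F,K)$. A random locally convex module $(E,\mathcal P)$ is a left $L^0(\mathcal F,K)$-module $E$ with a family $\mathcal P$ of $L^0$-seminorms such that $\bigvee\{\|x\|:\|\cdot\|\in\mathcal P\}=0$ implies $x=0$. For finite $\mathcal Q\subset\mathcal P$, $\|x\|_{\mathcal Q}=\bigvee_{\|\cdot\|\in\mathcal Q}\|x\|$. The $(\varepsilon,\lambda)$-topology $\mathcal T_{\varepsilon,\lambda}$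 on $E$ has local base at $0$ the sets $\{x: P\{\omega:\|x\|_{\mathcal Q}(\omega)<\varepsilon\}>1-\lambda\}$, $\mathcal Q$ finite, $\varepsilon>0$, $0<\lambda<1$. The locally $L^0$-convex topology $\mathcal T_c$: $G$ is open iff for every $x\in G$ there are finite $\mathcal Q\subset\mathcal P$ and $\varepsilon\in L^0_{++}$ with $x+\{y:\|y\|_{\mathcal Q}\le\varepsilon\}\subset G$. $L^0(\mathcal F,K)$ is regarded as a random locally convex module with $\mathcal P=\{|\cdot|\}$. A probability space is nonatomic if it has no atom, where an atom is $A\in\mathcal F$ with $P(A)>0$ such that every measurable $B\subset A$ has $P(B)=0$ or $P(A\setminus B)=0$. *)

theory Defs
  imports "HOL-Probability.Probability"
begin

text \<open>Elements of L0(F,K) are represented by measurable K-valued functions on Omega;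
  the scalar field K is R or C, encoded as a subset Kset of the complex numbers
  (Kset = range of_real for K = R, Kset = UNIV for K = C).  Equality in L0 is
  almost-sure equality; all notions below respect it.\<close>

definition L0 :: "'w measure \<Rightarrow> complex set \<Rightarrow> ('w \<Rightarrow> complex) set" where
  "L0 M Kset = {\<xi>. \<xi> \<in> borel_measurable M \<and> (\<forall>\<omega>\<in>space M. \<xi> \<omega> \<in> Kset)}"

definition L0_pp :: "'w measure \<Rightarrow> ('w \<Rightarrow> real) set" where
  "L0_pp M = {\<epsilon>. \<epsilon> \<in> borel_measurable M \<and> (AE \<omega> in M. \<epsilon> \<omega> > 0)}"

definition is_atom :: "'w measure \<Rightarrow> 'w set \<Rightarrow> bool" where
  "is_atom M A \<longleftrightarrow> A \<in> sets M \<and> measure M A > 0 \<and>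
     (\<forall>B\<in>sets M. B \<subseteq> A \<longrightarrow> measure M B = 0 \<or> measure M (A - B) = 0)"

definition nonatomic :: "'w measure \<Rightarrow> bool" where
  "nonatomic M \<longleftrightarrow> (\<nexists>A. is_atom M A)"

definition L0_module :: "'w measure \<Rightarrow> complex set \<Rightarrow> (('w \<Rightarrow> complex) \<Rightarrow> 'e::ab_group_add \<Rightarrow> 'e) \<Rightarrow> bool" where
  "L0_module M Kset smul \<longleftrightarrow>
     (\<forall>\<xi>\<in>L0 M Kset. \<forall>\<eta>\<in>L0 M Kset. (AE \<omega> in M. \<xi> \<omega> = \<eta> \<omega>) \<longrightarrow> (\<forall>x. smul \<xi> x = smul \<eta> x)) \<and>
     (\<forall>\<xi>\<in>L0 M Kset. \<forall>x y. smul \<xi> (x + y) = smul \<xi> x + smul \<xi> y) \<and>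
     (\<forall>\<xi>\<in>L0 M Kset. \<forall>\<eta>\<in>L0 M Kset. \<forall>x. smul (\<lambda>\<omega>. \<xi> \<omega> + \<eta> \<omega>) x = smul \<xi> x + smul \<eta> x) \<and>
     (\<forall>\<xi>\<in>L0 M Kset. \<forall>\<eta>\<in>L0 M Kset. \<forall>x. smul (\<lambda>\<omega>. \<xi> \<omega> * \<eta> \<omega>) x = smul \<xi> (smul \<eta> x)) \<and>
     (\<forall>x. smul (\<lambda>\<omega>. 1) x = x)"

definition L0_seminorm :: "'w measure \<Rightarrow> complex set \<Rightarrow> (('w \<Rightarrow> complex) \<Rightarrow> 'e::ab_group_add \<Rightarrow> 'e)
    \<Rightarrow> ('e \<Rightarrow> 'w \<Rightarrow> real) \<Rightarrow> bool" where
  "L0_seminorm M Kset smul p \<longleftrightarrow>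
     (\<forall>x. p x \<in> borel_measurable M \<and> (AE \<omega> in M. p x \<omega> \<ge> 0)) \<and>
     (\<forall>x y. AE \<omega> in M. p (x + y) \<omega> \<le> p x \<omega> + p y \<omega>) \<and>
     (\<forall>\<xi>\<in>L0 M Kset. \<forall>x. AE \<omega> in M. p (smul \<xi> x) \<omega> = cmod (\<xi> \<omega>) * p x \<omega>)"

text \<open>Random locally convex module (E, P): the seminorms separate points,
  i.e. the L0-supremum of all \<parallel>x\<parallel> (which are \<ge> 0) is 0 only for x = 0.\<close>
definition RLC_module :: "'w measure \<Rightarrow> complex set \<Rightarrow> (('w \<Rightarrow> complex) \<Rightarrow> 'e::ab_group_add \<Rightarrow> 'e)
    \<Rightarrow> ('e \<Rightarrow> 'w \<Rightarrow> real) set \<Rightarrow> bool" where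
  "RLC_module M Kset smul \<P> \<longleftrightarrow>
     L0_module M Kset smul \<and> (\<forall>p\<in>\<P>. L0_seminorm M Kset smul p) \<and>
     (\<forall>x. (\<forall>p\<in>\<P>. AE \<omega> in M. p x \<omega> = 0) \<longrightarrow> x = 0)"

definition normQ :: "('e \<Rightarrow> 'w \<Rightarrow> real) set \<Rightarrow> 'e \<Rightarrow> 'w \<Rightarrow> real" where
  "normQ Q x \<omega> = Max ((\<lambda>p. p x \<omega>) ` Q)"

definition eps_lambda_open :: "'w measure \<Rightarrow> ('e::ab_group_add \<Rightarrow> 'w \<Rightarrow> real) set \<Rightarrow> 'e set \<Rightarrow> bool" where
  "eps_lambda_open M \<P> G \<longleftrightarrow>
     (\<forall>x\<in>G. \<exists>Q \<epsilon> lam. finite Q \<and> Q \<noteq> {} \<and> Q \<subseteq> \<P> \<and> \<epsilon> > 0 \<and> 0 < lam \<and> lam < 1 \<and>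
        {x + y | y. measure M {\<omega> \<in> space M. normQ Q y \<omega> < \<epsilon>} > 1 - lam} \<subseteq> G)"

definition Tc_open_L0 :: "'w measure \<Rightarrow> complex set \<Rightarrow> ('w \<Rightarrow> complex) set \<Rightarrow> bool" where
  "Tc_open_L0 M Kset G \<longleftrightarrow> G \<subseteq> L0 M Kset \<and>
     (\<forall>\<xi>\<in>G. \<exists>\<epsilon>\<in>L0_pp M.
        {\<eta> \<in> L0 M Kset. AE \<omega> in M. cmod (\<eta> \<omega> - \<xi> \<omega>) \<le> \<epsilon> \<omega>} \<subseteq> G)"

definition L0_module_hom :: "'w measure \<Rightarrow> complex set \<Rightarrow> (('w \<Rightarrow> complex) \<Rightarrow> 'e::ab_group_add \<Rightarrow> 'e)
    \<Rightarrow> ('e \<Rightarrow> 'w \<Rightarrow> complex) \<Rightarrow> bool" where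
  "L0_module_hom M Kset smul f \<longleftrightarrow>
     (\<forall>x. f x \<in> L0 M Kset) \<and>
     (\<forall>x y. AE \<omega> in M. f (x + y) \<omega> = f x \<omega> + f y \<omega>) \<and>
     (\<forall>\<xi>\<in>L0 M Kset. \<forall>x. AE \<omega> in M. f (smul \<xi> x) \<omega> = \<xi> \<omega> * f x \<omega>)"

end

theory Submission
  imports Defs
begin

text \<open>
  The open unit ball of L0(F,K) is open for the locally L0-convex
  topology T_c and contains f 0 = 0, so by continuity its preimage under f contains
  an (\<epsilon>,\<lambda>)-neighbourhood {y. P(\<parallel>y\<parallel>_Q < \<epsilon>) > 1 - \<lambda>} of 0.  For a measurable set B
  with P(B) < \<lambda> and any n, the element (n\<cdot>1_B)\<cdot>x has seminorms vanishing off B, so it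
  lies in this neighbourhood; hence |n\<cdot>1_B\<cdot>f(x)| < 1 a.s. for all n, i.e. f(x) = 0 a.s.
  on B.  Finally, in a nonatomic space every set of positive measure contains
  subsets of arbitrarily small positive measure, so a property holding a.s. on
  every small set holds a.s. everywhere.
\<close>

lemma nonatomic_half_subset:
  assumes "finite_measure M" and "nonatomic M"
    and A: "A \<in> sets M" "measure M A > 0"
  shows "\<exists>B\<in>sets M. B \<subseteq> A \<and> 0 < measure M B \<and> measure M B \<le> measure M A / 2"
proof -
  interpret finite_measure M by fact
  have "\<not> is_atom M A" using \<open>nonatomic M\<close> unfolding nonatomic_def by blast
  then obtain C where C: "C \<in> sets M" "C \<subseteq> A" "measure M C \<noteq> 0" "measure M (A - C) \<noteq> 0"
    using A unfolding is_atom_def by blast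
  have split: "measure M A = measure M C + measure M (A - C)"
    using C A finite_measure_Diff[of A C] finite_measure_mono[of C A] by auto
  have "measure M C > 0" "measure M (A - C) > 0"
    using C(3,4) measure_nonneg[of M C] measure_nonneg[of M "A - C"] by linarith+
  then show ?thesis
  proof (cases "measure M C \<le> measure M A / 2")
    case False
    then have "measure M (A - C) \<le> measure M A / 2" using split by linarith
    then show ?thesis using C A \<open>measure M (A - C) > 0\<close> by blast
  qed (use C in blast)
qed

text \<open>Iterating the halving: subsets of arbitrarily small positive measure.\<close>
lemma nonatomic_small_subset:
  assumes "finite_measure M" and "nonatomic M"
    and A: "A \<in> sets M" "measure M A > 0" and "lam > 0"
  shows "\<exists>B\<in>sets M. B \<subseteq> A \<and> 0 < measure M B \<and> measure M B < lam"
proof -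
  have halved: "\<exists>B\<in>sets M. B \<subseteq> A \<and> 0 < measure M B \<and> measure M B \<le> measure M A / 2^n" for n
  proof (induction n)
    case 0
    then show ?case using A by auto
  next
    case (Suc n)
    then obtain B where B: "B \<in> sets M" "B \<subseteq> A" "0 < measure M B"
        "measure M B \<le> measure M A / 2^n"
      by blast
    obtain B' where B': "B' \<in> sets M" "B' \<subseteq> B" "0 < measure M B'" "measure M B' \<le> measure M B / 2"
      using nonatomic_half_subset[OF assms(1,2) B(1,3)] by blast
    have "measure M B' \<le> measure M B / 2" by (fact B'(4))
    also have "\<dots> \<le> measure M A / 2^Suc n" using divide_right_mono[OF B(4), of 2] by simp
    finally have "measure M B' \<le> measure M A / 2^Suc n" .
    then show ?case using B B' by blast
  qed
  obtain n where n: "(1/2::real)^n < lam / measure M A"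
    using real_arch_pow_inv[of "lam / measure M A" "1/2"] \<open>lam > 0\<close> A(2) by auto
  obtain B where B: "B \<in> sets M" "B \<subseteq> A" "0 < measure M B" "measure M B \<le> measure M A / 2^n"
    using halved by blast
  have "measure M A / 2^n = measure M A * (1/2)^n" by (simp add: power_divide)
  also have "\<dots> < measure M A * (lam / measure M A)"
    using n A(2) by (rule mult_strict_left_mono)
  also have "\<dots> = lam" using A(2) by simp
  finally show ?thesis using B by (meson order.strict_trans1)
qed

lemma nonatomic_AE_from_small_sets:
  assumes "finite_measure M" and "nonatomic M" and "lam > 0"
    and bad: "{\<omega> \<in> space M. \<not> P \<omega>} \<in> sets M"
    and small: "\<And>B. B \<in> sets M \<Longrightarrow> measure M B < lam \<Longrightarrow> AE \<omega> in M. \<omega> \<in> B \<longrightarrow> P \<omega>"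
  shows "AE \<omega> in M. P \<omega>"
proof (rule ccontr)
  interpret finite_measure M by fact
  let ?A = "{\<omega> \<in> space M. \<not> P \<omega>}"
  assume "\<not> (AE \<omega> in M. P \<omega>)"
  then have "emeasure M ?A \<noteq> 0" using AE_iff_measurable[OF bad refl] by simp
  then have "measure M ?A \<noteq> 0" by (simp add: emeasure_eq_measure)
  then have "measure M ?A > 0" using measure_nonneg[of M ?A] by linarith
  then obtain B where B: "B \<in> sets M" "B \<subseteq> ?A" "0 < measure M B" "measure M B < lam"
    using nonatomic_small_subset[OF assms(1,2) bad _ \<open>lam > 0\<close>] by blast
  have "AE \<omega> in M. \<omega> \<notin> B"
    using small[OF B(1,4)]
  proof eventually_elim
    case (elim \<omega>)
    then show ?case using B(2) by blast
  qed
  moreover have "{\<omega> \<in> space M. \<not> \<omega> \<notin> B} = B" using sets.sets_into_space[OF B(1)] by blast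
  ultimately have "emeasure M B = 0" using AE_iff_measurable[OF B(1)] by simp
  then show False using B(3) by (simp add: emeasure_eq_measure)
qed

definition L0_unit_ball :: "'w measure \<Rightarrow> complex set \<Rightarrow> ('w \<Rightarrow> complex) set" where
  "L0_unit_ball M Kset = {\<eta> \<in> L0 M Kset. AE \<omega> in M. cmod (\<eta> \<omega>) < 1}"

text \<open>The open unit ball is T_c-open: around \<xi> the ball of random radius
  (1 - |\<xi>|)/2 stays inside it.\<close>
lemma Tc_open_L0_unit_ball: "Tc_open_L0 M Kset (L0_unit_ball M Kset)"
  unfolding Tc_open_L0_def
proof (intro conjI ballI)
  show "L0_unit_ball M Kset \<subseteq> L0 M Kset" by (auto simp: L0_unit_ball_def)
  fix \<xi> assume \<xi>: "\<xi> \<in> L0_unit_ball M Kset"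
  define r where "r = (\<lambda>\<omega>. (1 - cmod (\<xi> \<omega>)) / 2)"
  have [measurable]: "\<xi> \<in> borel_measurable M" using \<xi> by (auto simp: L0_unit_ball_def L0_def)
  have \<xi>_small: "AE \<omega> in M. cmod (\<xi> \<omega>) < 1" using \<xi> by (auto simp: L0_unit_ball_def)
  have "r \<in> borel_measurable M" unfolding r_def by measurable
  moreover have "AE \<omega> in M. r \<omega> > 0" using \<xi>_small by eventually_elim (simp add: r_def)
  ultimately have "r \<in> L0_pp M" by (simp add: L0_pp_def)
  moreover have "{\<eta> \<in> L0 M Kset. AE \<omega> in M. cmod (\<eta> \<omega> - \<xi> \<omega>) \<le> r \<omega>} \<subseteq> L0_unit_ball M Kset"
  proof clarify
    fix \<eta> assume \<eta>: "\<eta> \<in> L0 M Kset" "AE \<omega> in M. cmod (\<eta> \<omega> - \<xi> \<omega>) \<le> r \<omega>"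
    have "AE \<omega> in M. cmod (\<eta> \<omega>) < 1" using \<eta>(2) \<xi>_small
    proof eventually_elim
      case (elim \<omega>)
      have "cmod (\<eta> \<omega>) \<le> cmod (\<eta> \<omega> - \<xi> \<omega>) + cmod (\<xi> \<omega>)"
        using norm_triangle_ineq[of "\<eta> \<omega> - \<xi> \<omega>" "\<xi> \<omega>"] by simp
      moreover have "2 * cmod (\<eta> \<omega> - \<xi> \<omega>) \<le> 1 - cmod (\<xi> \<omega>)"
        using elim(1) by (simp add: r_def)
      ultimately show ?case using elim(2) by linarith
    qed
    then show "\<eta> \<in> L0_unit_ball M Kset" using \<eta>(1) by (simp add: L0_unit_ball_def)
  qed
  ultimately show "\<exists>\<epsilon>\<in>L0_pp M. {\<eta> \<in> L0 M Kset. AE \<omega> in M. cmod (\<eta> \<omega> - \<xi> \<omega>) \<le> \<epsilon> \<omega>}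
      \<subseteq> L0_unit_ball M Kset"
    by blast
qed

text \<open>If the scalar \<xi> vanishes off B, then \<parallel>\<xi>\<cdot>x\<parallel>_Q vanishes a.s. off B, so
  P(\<parallel>\<xi>\<cdot>x\<parallel>_Q < \<epsilon>) \<ge> 1 - P(B).\<close>
lemma normQ_small_off_support:
  assumes "prob_space M"
    and seminorms: "\<forall>p\<in>Q. L0_seminorm M Kset smul p" and Q: "finite Q" "Q \<noteq> {}"
    and "\<epsilon> > 0" and \<xi>: "\<xi> \<in> L0 M Kset" and B: "B \<in> sets M"
    and off_B: "\<And>\<omega>. \<omega> \<notin> B \<Longrightarrow> \<xi> \<omega> = 0"
  shows "1 - measure M B \<le> measure M {\<omega> \<in> space M. normQ Q (smul \<xi> x) \<omega> < \<epsilon>}"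
proof -
  interpret prob_space M by fact
  let ?y = "smul \<xi> x"
  have scale: "AE \<omega> in M. \<forall>p\<in>Q. p ?y \<omega> = cmod (\<xi> \<omega>) * p x \<omega>"
    by (rule AE_finite_allI[OF Q(1)]) (use seminorms \<xi> in \<open>auto simp: L0_seminorm_def\<close>)
  have [measurable]: "normQ Q ?y \<in> borel_measurable M"
    unfolding normQ_def
    by (rule borel_measurable_Max[OF Q(1)]) (use seminorms in \<open>auto simp: L0_seminorm_def\<close>)
  have "AE \<omega> in M. \<omega> \<in> space M - B \<longrightarrow> \<omega> \<in> {\<omega> \<in> space M. normQ Q ?y \<omega> < \<epsilon>}"
    using scale
  proof eventually_elim
    case (elim \<omega>)
    show ?case
    proof
      assume \<omega>: "\<omega> \<in> space M - B"
      then have "(\<lambda>p. p ?y \<omega>) ` Q = {0}" using elim off_B Q(2) by auto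
      then show "\<omega> \<in> {\<omega> \<in> space M. normQ Q ?y \<omega> < \<epsilon>}"
        using \<omega> \<open>\<epsilon> > 0\<close> by (simp add: normQ_def)
    qed
  qed
  moreover have "{\<omega> \<in> space M. normQ Q ?y \<omega> < \<epsilon>} \<in> sets M" by measurable
  ultimately have "measure M (space M - B) \<le> measure M {\<omega> \<in> space M. normQ Q ?y \<omega> < \<epsilon>}"
    using finite_measure_mono_AE by blast
  moreover have "measure M (space M - B) = 1 - measure M B" by (simp add: prob_compl B)
  ultimately show ?thesis by linarith
qed

lemma AE_zero_if_multiples_bounded:
  fixes g :: "'w \<Rightarrow> 'a::real_normed_vector"
  assumes "\<And>n::nat. AE \<omega> in M. \<omega> \<in> B \<longrightarrow> of_nat n * norm (g \<omega>) < 1"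
  shows "AE \<omega> in M. \<omega> \<in> B \<longrightarrow> g \<omega> = 0"
proof -
  have "AE \<omega> in M. \<forall>n::nat. \<omega> \<in> B \<longrightarrow> of_nat n * norm (g \<omega>) < 1"
    by (subst AE_all_countable) (use assms in blast)
  then show ?thesis
  proof eventually_elim
    case (elim \<omega>)
    show ?case
    proof (rule impI, rule ccontr)
      assume "\<omega> \<in> B" "g \<omega> \<noteq> 0"
      then have pos: "norm (g \<omega>) > 0" by simp
      obtain n :: nat where "1 / norm (g \<omega>) < n" using reals_Archimedean2 by blast
      then have "1 < of_nat n * norm (g \<omega>)" using pos by (simp add: divide_less_eq)
      moreover have "of_nat n * norm (g \<omega>) < 1" using elim \<open>\<omega> \<in> B\<close> by blast
      ultimately show False by linarith
    qed
  qed
qed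

text \<open>Suppose every y with P(\<parallel>y\<parallel>_Q < \<epsilon>) > 1 - \<lambda> is mapped by f into the unit ball.
  Then f x vanishes a.s. on every set B with P(B) < \<lambda>: the elements (n\<cdot>1_B)\<cdot>x all
  satisfy this condition, and f((n\<cdot>1_B)\<cdot>x) = n\<cdot>1_B\<cdot>f(x).\<close>
lemma hom_vanishes_on_small_sets:
  assumes "prob_space M"
    and reals: "\<And>r. complex_of_real r \<in> Kset"
    and seminorms: "\<forall>p\<in>Q. L0_seminorm M Kset smul p" and Q: "finite Q" "Q \<noteq> {}" and "\<epsilon> > 0"
    and hom: "L0_module_hom M Kset smul f"
    and nbhd: "\<And>y. measure M {\<omega> \<in> space M. normQ Q y \<omega> < \<epsilon>} > 1 - lam
                  \<Longrightarrow> f y \<in> L0_unit_ball M Kset"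
    and B: "B \<in> sets M" "measure M B < lam"
  shows "AE \<omega> in M. \<omega> \<in> B \<longrightarrow> f x \<omega> = 0"
proof (rule AE_zero_if_multiples_bounded)
  fix n :: nat
  define \<xi> where "\<xi> = (\<lambda>\<omega>. complex_of_real (of_nat n * indicator B \<omega>))"
  have "\<xi> \<in> borel_measurable M" using B(1) unfolding \<xi>_def by measurable
  moreover have "\<xi> \<omega> \<in> Kset" for \<omega> unfolding \<xi>_def by (rule reals)
  ultimately have \<xi>_L0: "\<xi> \<in> L0 M Kset" by (simp add: L0_def)
  have "1 - lam < measure M {\<omega> \<in> space M. normQ Q (smul \<xi> x) \<omega> < \<epsilon>}"
    using normQ_small_off_support[OF assms(1) seminorms Q \<open>\<epsilon> > 0\<close> \<xi>_L0 B(1), of x] B(2)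
    by (simp add: \<xi>_def)
  then have "AE \<omega> in M. cmod (f (smul \<xi> x) \<omega>) < 1"
    using nbhd by (simp add: L0_unit_ball_def)
  moreover have "AE \<omega> in M. f (smul \<xi> x) \<omega> = \<xi> \<omega> * f x \<omega>"
    using hom \<xi>_L0 by (simp add: L0_module_hom_def)
  ultimately show "AE \<omega> in M. \<omega> \<in> B \<longrightarrow> of_nat n * cmod (f x \<omega>) < 1"
    by eventually_elim (auto simp: \<xi>_def norm_mult indicator_def)
qed

lemma eps_lambda_open_zero_nbhd:
  fixes U :: "'e::ab_group_add set"
  assumes "eps_lambda_open M \<P> U" and "0 \<in> U"
  obtains Q \<epsilon> lam where "finite Q" "Q \<noteq> {}" "Q \<subseteq> \<P>" "\<epsilon> > 0" "lam > 0"
    and "\<And>y. measure M {\<omega> \<in> space M. normQ Q y \<omega> < \<epsilon>} > 1 - lam \<Longrightarrow> y \<in> U"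
proof -
  obtain Q \<epsilon> lam where Q: "finite Q" "Q \<noteq> {}" "Q \<subseteq> \<P>" "\<epsilon> > 0" "lam > 0"
    and sub: "{0 + y | y. measure M {\<omega> \<in> space M. normQ Q y \<omega> < \<epsilon>} > 1 - lam} \<subseteq> U"
    using bspec[OF assms(1)[unfolded eps_lambda_open_def] assms(2)] by (elim exE conjE) blast
  have "y \<in> U" if "measure M {\<omega> \<in> space M. normQ Q y \<omega> < \<epsilon>} > 1 - lam" for y
  proof -
    have "0 + y \<in> U" using that by (intro subsetD[OF sub]) blast
    then show ?thesis by simp
  qed
  then show ?thesis using Q that by blast
qed

lemma L0_module_hom_zero:
  assumes "L0_module_hom M Kset smul f"
  shows "AE \<omega> in M. f 0 \<omega> = 0"
proof -
  have "AE \<omega> in M. f (0 + 0) \<omega> = f 0 \<omega> + f 0 \<omega>"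
    using assms unfolding L0_module_hom_def by blast
  then show ?thesis by eventually_elim simp
qed

theorem theorem1p2:
  fixes M :: "'w measure" and Kset :: "complex set"
    and smul :: "('w \<Rightarrow> complex) \<Rightarrow> 'e::ab_group_add \<Rightarrow> 'e"
    and \<P> :: "('e \<Rightarrow> 'w \<Rightarrow> real) set"
    and f :: "'e \<Rightarrow> 'w \<Rightarrow> complex"
  assumes "prob_space M"
    and "nonatomic M"
    and "Kset = range complex_of_real \<or> Kset = UNIV"
    and "RLC_module M Kset smul \<P>"
    and "L0_module_hom M Kset smul f"
    and "\<forall>G. Tc_open_L0 M Kset G \<longrightarrow> eps_lambda_open M \<P> (f -` G)"
  shows "\<forall>x. AE \<omega> in M. f x \<omega> = 0"
proof
  fix x
  interpret prob_space M by fact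
  have fL0: "\<And>y. f y \<in> L0 M Kset" using assms(5) by (simp add: L0_module_hom_def)
  have "AE \<omega> in M. cmod (f 0 \<omega>) < 1"
    using L0_module_hom_zero[OF assms(5)] by eventually_elim simp
  then have zero_in: "0 \<in> f -` L0_unit_ball M Kset" using fL0 by (simp add: L0_unit_ball_def)
  have "eps_lambda_open M \<P> (f -` L0_unit_ball M Kset)"
    using assms(6) Tc_open_L0_unit_ball by blast
  then obtain Q \<epsilon> lam where Q: "finite Q" "Q \<noteq> {}" "Q \<subseteq> \<P>" "\<epsilon> > 0" "lam > 0"
    and nbhd: "\<And>y. measure M {\<omega> \<in> space M. normQ Q y \<omega> < \<epsilon>} > 1 - lam
                  \<Longrightarrow> f y \<in> L0_unit_ball M Kset"
    using zero_in by (rule eps_lambda_open_zero_nbhd) auto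
  have seminorms: "\<forall>p\<in>Q. L0_seminorm M Kset smul p"
    using assms(4) Q(3) by (auto simp: RLC_module_def)
  have reals: "\<And>r. complex_of_real r \<in> Kset" using assms(3) by auto
  have [measurable]: "f x \<in> borel_measurable M" using fL0[of x] by (simp add: L0_def)
  show "AE \<omega> in M. f x \<omega> = 0"
  proof (rule nonatomic_AE_from_small_sets[OF finite_measure_axioms assms(2) \<open>lam > 0\<close>])
    show "{\<omega> \<in> space M. f x \<omega> \<noteq> 0} \<in> sets M" by measurable
    show "AE \<omega> in M. \<omega> \<in> B \<longrightarrow> f x \<omega> = 0" if "B \<in> sets M" "measure M B < lam" for B
      by (rule hom_vanishes_on_small_sets[OF assms(1) reals seminorms Q(1,2,4) assms(5) nbhd that])
  qed
qed

end
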